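(* For all integers $v\ge1$ and $0\le i\le v-1$, $$c_{2v,i}=2^{2i}\,\frac{\Gamma(2v-2i)}{\Gamma(2v)}\,s(v,i).$$
   Context: The generalized cosecant numbers $c_{\rho,k}$ are defined as the coefficients of the power series $\left(\frac{x}{\sin x}\right)^{\rho}=\sum_{k\ge0}c_{\rho,k}\,x^{2k}$ (for $|x|<\pi$); in particular $c_{\rho,0}=1$ and $c_{\rho,1}=\rho/6$. For integers $v\ge1$ and $0\le n\le v-1$, $s(v,n)$ denotes the $n$-th elementary symmetric polynomial evaluated at $1^2,2^2,\dots,(v-1)^2$, with $s(v,0)=1$. *)

theory Defs
  imports "HOL-Analysis.Analysis"
begin

text \<open>The function x / sin x raised to the power rho, with its removable
  singularity at 0 filled in by the limiting value 1.  For 0 < |x| < pi we have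
  x / sin x > 0, so the real power is well defined there.\<close>
definition cosec_pow :: "real \<Rightarrow> real \<Rightarrow> real" where
  "cosec_pow \<rho> x = (if x = 0 then 1 else (x / sin x) powr \<rho>)"

definition cosec_num :: "real \<Rightarrow> nat \<Rightarrow> real" where
  "cosec_num \<rho> = (THE c. \<forall>x. \<bar>x\<bar> < pi \<longrightarrow>
      (\<lambda>k. c k * x ^ (2 * k)) sums cosec_pow \<rho> x)"

definition esym_sq :: "nat \<Rightarrow> nat \<Rightarrow> real" where
  "esym_sq v n = (\<Sum>S\<in>{S. S \<subseteq> {1..<v} \<and> card S = n}. \<Prod>j\<in>S. (real j)^2)"

end

theory Submission
  imports Defs "HOL-Complex_Analysis.Complex_Analysis"
begin

(* Let T = sin x / x and Q = x / sin x = 1 / T.  The identities x T' = cos x - T,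
   cos^2 x = 1 - x^2 T^2 and Q T = 1 show that every power Q^n satisfies the Euler-type
   equation  n(n+1) Q^n - 2n x (Q^n)' + x^2 (Q^n)'' + n^2 x^2 Q^n = n(n+1) Q^(n+2).
   Comparing coefficients of x^(2i+2) for n = 2w gives a recurrence for the coefficients of
   Q^(2v) which, after scaling by (2v-1)! / (4^i (2v-2i-1)!), is the recurrence
   s(w+1,i+1) = s(w,i+1) + w^2 s(w,i) of the elementary symmetric functions of squares.
   Finally z / sin z is holomorphic on |z| < pi, so its formal expansion converges there,
   and uniqueness of power series identifies the real coefficients with c_(rho,k). *)

section \<open>Uniqueness of power series\<close>

lemma sums_even_powser_iff:
  fixes c :: "nat \<Rightarrow> 'a::real_normed_algebra_1"
  shows "(\<lambda>k. c k * x ^ (2 * k)) sums s \<longleftrightarrow>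
         (\<lambda>n. (if even n then c (n div 2) else 0) * x ^ n) sums s"
proof -
  have "(\<lambda>k. (\<lambda>n. (if even n then c (n div 2) else 0) * x ^ n) (2 * k)) sums s \<longleftrightarrow>
        (\<lambda>n. (if even n then c (n div 2) else 0) * x ^ n) sums s"
    by (rule sums_mono_reindex) (auto simp: strict_mono_def elim!: evenE)
  then show ?thesis by simp
qed

lemma sums_even_part_powser:
  fixes a :: "nat \<Rightarrow> 'a::real_normed_field"
  assumes "(\<lambda>n. a n * x ^ n) sums y" and "(\<lambda>n. a n * (-x) ^ n) sums y"
  shows "(\<lambda>k. a (2 * k) * x ^ (2 * k)) sums y"
proof -
  have "(\<lambda>n. (a n * x ^ n + a n * (-x) ^ n) / 2) sums ((y + y) / 2)"
    by (intro sums_divide sums_add assms)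
  also have "(\<lambda>n. (a n * x ^ n + a n * (-x) ^ n) / 2) =
               (\<lambda>n. (if even n then a (2 * (n div 2)) else 0) * x ^ n)"
    by (auto simp: fun_eq_iff)
  finally show ?thesis
    by (simp add: sums_even_powser_iff)
qed

lemma powser_coeffs_eq_0:
  fixes b :: "nat \<Rightarrow> 'a::{real_normed_field,banach}"
  assumes "r > 0" and sums_0: "\<And>x. norm x < r \<Longrightarrow> (\<lambda>n. b n * x ^ n) sums 0"
  shows "b n = 0"
proof (induction n rule: less_induct)
  case (less n)
  have "(\<lambda>k. b (k + n) * x ^ k) sums 0" if "x \<noteq> 0" "norm x < r" for x
  proof -
    have "(\<lambda>k. b (k + n) * x ^ (k + n)) sums (0 - (\<Sum>i<n. b i * x ^ i))"
      using sums_split_initial_segment[OF sums_0[OF \<open>norm x < r\<close>], of n] by simp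
    also have "(\<Sum>i<n. b i * x ^ i) = 0"
      using less by simp
    finally have "(\<lambda>k. inverse (x ^ n) * (b (k + n) * x ^ (k + n))) sums (inverse (x ^ n) * 0)"
      by (intro sums_mult) simp
    also have "(\<lambda>k. inverse (x ^ n) * (b (k + n) * x ^ (k + n))) = (\<lambda>k. b (k + n) * x ^ k)"
      using that by (auto simp: power_add field_simps)
    finally show ?thesis by simp
  qed
  then have "((\<lambda>_. 0) \<longlongrightarrow> b (0 + n)) (at (0 :: 'a))"
    by (rule powser_limit_0_strong[where a = "\<lambda>k. b (k + n)", OF \<open>r > 0\<close>])
  then show ?case
    using LIM_const_eq by fastforce
qed

lemma powser_coeffs_unique:
  fixes a b :: "nat \<Rightarrow> 'a::{real_normed_field,banach}"
  assumes "r > 0"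
    and "\<And>x. norm x < r \<Longrightarrow> (\<lambda>n. a n * x ^ n) sums f x"
    and "\<And>x. norm x < r \<Longrightarrow> (\<lambda>n. b n * x ^ n) sums f x"
  shows "a = b"
proof
  fix n
  have "(\<lambda>n. (a n - b n) * x ^ n) sums 0" if "norm x < r" for x
    using sums_diff[OF assms(2,3)[OF that]] by (simp add: algebra_simps)
  then have "a n - b n = 0"
    by (rule powser_coeffs_eq_0[OF \<open>r > 0\<close>])
  then show "a n = b n" by simp
qed

section \<open>Elementary symmetric functions of squares\<close>

lemma card_subsets_insert:
  assumes "finite A" "a \<notin> A"
  shows "{S. S \<subseteq> insert a A \<and> card S = Suc k} =
           {S. S \<subseteq> A \<and> card S = Suc k} \<union> insert a ` {S. S \<subseteq> A \<and> card S = k}"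
proof (intro equalityI subsetI)
  fix S assume S: "S \<in> {S. S \<subseteq> insert a A \<and> card S = Suc k}"
  show "S \<in> {S. S \<subseteq> A \<and> card S = Suc k} \<union> insert a ` {S. S \<subseteq> A \<and> card S = k}"
  proof (cases "a \<in> S")
    case True
    have "finite S" using S assms(1) finite_subset by auto
    with S True have "S - {a} \<in> {S. S \<subseteq> A \<and> card S = k}" by auto
    moreover have "S = insert a (S - {a})" using True by auto
    ultimately show ?thesis by blast
  qed (use S in auto)
next
  fix S assume "S \<in> {S. S \<subseteq> A \<and> card S = Suc k} \<union> insert a ` {S. S \<subseteq> A \<and> card S = k}"
  then show "S \<in> {S. S \<subseteq> insert a A \<and> card S = Suc k}"
  proof
    assume "S \<in> insert a ` {S. S \<subseteq> A \<and> card S = k}"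
    then obtain T where "T \<subseteq> A" "card T = k" "S = insert a T" by auto
    with assms show ?thesis by (auto simp: card_insert_if finite_subset)
  qed auto
qed

lemma sum_prod_card_subsets_insert:
  fixes g :: "'a \<Rightarrow> 'b::comm_semiring_1"
  assumes "finite A" "a \<notin> A"
  shows "(\<Sum>S | S \<subseteq> insert a A \<and> card S = Suc k. \<Prod>j\<in>S. g j) =
           (\<Sum>S | S \<subseteq> A \<and> card S = Suc k. \<Prod>j\<in>S. g j)
           + g a * (\<Sum>S | S \<subseteq> A \<and> card S = k. \<Prod>j\<in>S. g j)"
proof -
  have fin: "finite {S. S \<subseteq> A \<and> card S = l}" for l
    using assms(1) by simp
  have inj: "inj_on (insert a) {S. S \<subseteq> A \<and> card S = k}"
    using assms(2) by (intro inj_onI) (metis insert_ident mem_Collect_eq subsetD)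
  have "(\<Sum>S | S \<subseteq> insert a A \<and> card S = Suc k. \<Prod>j\<in>S. g j) =
          (\<Sum>S | S \<subseteq> A \<and> card S = Suc k. \<Prod>j\<in>S. g j)
          + (\<Sum>S\<in>insert a ` {S. S \<subseteq> A \<and> card S = k}. \<Prod>j\<in>S. g j)"
    unfolding card_subsets_insert[OF assms]
    by (rule sum.union_disjoint) (use fin assms(2) in auto)
  also have "(\<Sum>S\<in>insert a ` {S. S \<subseteq> A \<and> card S = k}. \<Prod>j\<in>S. g j) =
               (\<Sum>S | S \<subseteq> A \<and> card S = k. \<Prod>j\<in>insert a S. g j)"
    by (rule sum.reindex[OF inj, unfolded comp_def])
  also have "\<dots> = (\<Sum>S | S \<subseteq> A \<and> card S = k. g a * (\<Prod>j\<in>S. g j))"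
    using assms by (intro sum.cong refl) (auto intro: prod.insert finite_subset)
  finally show ?thesis by (simp add: sum_distrib_left)
qed

lemma esym_sq_0 [simp]: "esym_sq v 0 = 1"
proof -
  have "{S. S \<subseteq> {1..<v} \<and> card S = 0} = {{}}"
    by (auto dest: finite_subset)
  then show ?thesis by (simp add: esym_sq_def)
qed

lemma esym_sq_eq_0: "v \<le> Suc i \<Longrightarrow> esym_sq v (Suc i) = 0"
proof -
  assume "v \<le> Suc i"
  then have "card S \<noteq> Suc i" if "S \<subseteq> {1..<v}" for S
    using card_mono[OF _ that] by simp
  then have "{S. S \<subseteq> {1..<v} \<and> card S = Suc i} = {}"
    by blast
  then show ?thesis
    by (simp only: esym_sq_def sum.empty)
qed

lemma esym_sq_Suc_Suc: "esym_sq (Suc v) (Suc i) = esym_sq v (Suc i) + (real v)^2 * esym_sq v i"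
proof (cases "v = 0")
  case True
  then show ?thesis by (simp add: esym_sq_eq_0)
next
  case False
  then have "{1..<Suc v} = insert v {1..<v}" by auto
  then show ?thesis
    unfolding esym_sq_def by (simp add: sum_prod_card_subsets_insert)
qed

section \<open>Coefficients of Euler-type differential equations\<close>

lemma fps_nth_X_mult_deriv:
  "fps_nth (fps_X * fps_deriv f) n = of_nat n * (fps_nth f n :: 'a::comm_semiring_1)"
  by (cases n) (simp_all add: fps_X_mult_nth)

lemma fps_nth_X2_mult_deriv2:
  "fps_nth (fps_X^2 * fps_deriv (fps_deriv f)) n =
     of_nat n * (of_nat n - 1) * (fps_nth f n :: 'a::comm_ring_1)"
  unfolding fps_X_power_mult_nth
  by (cases n; cases "n - 1") (simp_all add: algebra_simps)

lemma fps_nth_euler_ode: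
  fixes P R :: "'a::comm_ring_1 fps"
  assumes "fps_const a * P - fps_const b * (fps_X * fps_deriv P)
             + fps_X^2 * fps_deriv (fps_deriv P) + fps_const c * (fps_X^2 * P) = R"
  shows "fps_nth R j = (a - b * of_nat j + of_nat j * (of_nat j - 1)) * fps_nth P j
                       + (if 2 \<le> j then c * fps_nth P (j - 2) else 0)"
proof -
  have "fps_nth R j = a * fps_nth P j - b * (of_nat j * fps_nth P j)
          + of_nat j * (of_nat j - 1) * fps_nth P j
          + c * (if j < 2 then 0 else fps_nth P (j - 2))"
    using arg_cong[OF assms, of "\<lambda>f. fps_nth f j"]
    unfolding fps_add_nth fps_sub_nth fps_mult_left_const_nth fps_nth_X_mult_deriv
      fps_nth_X2_mult_deriv2
    unfolding fps_X_power_mult_nth by simp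
  then show ?thesis by (simp add: algebra_simps)
qed

section \<open>The formal power series of x / sin x\<close>

definition fps_sinc :: "'a::field_char_0 fps" where
  "fps_sinc = fps_shift 1 (fps_sin 1)"

definition fps_x_div_sin :: "'a::field_char_0 fps" where
  "fps_x_div_sin = inverse fps_sinc"

lemma fps_X_mult_sinc: "fps_X * fps_sinc = (fps_sin 1 :: 'a::field_char_0 fps)"
  by (intro fps_ext) (auto simp: fps_sinc_def)

lemma fps_nth_sinc_0 [simp]: "fps_nth (fps_sinc :: 'a::field_char_0 fps) 0 = 1"
  by (simp add: fps_sinc_def)

lemma fps_X_mult_deriv_sinc:
  "fps_X * fps_deriv fps_sinc = fps_cos 1 - (fps_sinc :: 'a::field_char_0 fps)"
proof -
  have "fps_deriv (fps_X * fps_sinc :: 'a fps) = fps_cos 1"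
    by (simp add: fps_X_mult_sinc fps_sin_deriv)
  then show ?thesis by (simp add: algebra_simps)
qed

lemma fps_X2_mult_deriv2_sinc:
  "fps_X^2 * fps_deriv (fps_deriv fps_sinc) =
     2 * fps_sinc - 2 * fps_cos 1 - fps_X^2 * (fps_sinc :: 'a::field_char_0 fps)"
proof -
  let ?T = "fps_sinc :: 'a fps"
  have "fps_deriv (fps_X * fps_deriv ?T) = fps_deriv (fps_cos 1 - ?T)"
    by (simp only: fps_X_mult_deriv_sinc)
  then have deriv2: "fps_X * fps_deriv (fps_deriv ?T) = - fps_sin 1 - 2 * fps_deriv ?T"
    by (simp add: fps_cos_deriv algebra_simps flip: fps_const_neg)
  have "fps_X^2 * fps_deriv (fps_deriv ?T) = fps_X * (fps_X * fps_deriv (fps_deriv ?T))"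
    by (simp add: power2_eq_square)
  also have "\<dots> = - (fps_X * fps_sin 1) - 2 * (fps_X * fps_deriv ?T)"
    by (simp add: deriv2 algebra_simps)
  also have "\<dots> = 2 * ?T - 2 * fps_cos 1 - fps_X^2 * ?T"
    by (simp add: fps_X_mult_deriv_sinc algebra_simps power2_eq_square flip: fps_X_mult_sinc)
  finally show ?thesis .
qed

lemma fps_cos_squared_sinc: "(fps_cos 1 :: 'a::field_char_0 fps)^2 = 1 - fps_X^2 * fps_sinc^2"
  using fps_sin_cos_sum_of_squares[of "1::'a"]
  by (metis fps_X_mult_sinc power_mult_distrib add_diff_cancel_right')

lemma fps_x_div_sin_mult_sinc: "fps_x_div_sin * (fps_sinc :: 'a::field_char_0 fps) = 1"
  by (simp add: fps_x_div_sin_def inverse_mult_eq_1)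

lemma fps_nth_x_div_sin_power_0 [simp]: "fps_nth ((fps_x_div_sin :: 'a::field_char_0 fps) ^ n) 0 = 1"
  by (simp add: fps_x_div_sin_def fps_nth_power_0)

lemma fps_deriv_x_div_sin:
  "fps_deriv fps_x_div_sin = - (fps_x_div_sin^2 * fps_deriv (fps_sinc :: 'a::field_char_0 fps))"
proof -
  let ?Q = "fps_x_div_sin :: 'a fps" and ?T = "fps_sinc :: 'a fps"
  have product_rule: "fps_deriv ?Q * ?T + ?Q * fps_deriv ?T = 0"
    using arg_cong[OF fps_x_div_sin_mult_sinc, of fps_deriv] by (simp add: algebra_simps)
  have "fps_deriv ?Q * (?Q * ?T) + ?Q^2 * fps_deriv ?T = ?Q * (fps_deriv ?Q * ?T + ?Q * fps_deriv ?T)"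
    by (simp add: power2_eq_square algebra_simps)
  then have "fps_deriv ?Q * (?Q * ?T) + ?Q^2 * fps_deriv ?T = 0"
    by (simp only: product_rule mult_zero_right)
  then show ?thesis by (simp add: fps_x_div_sin_mult_sinc eq_neg_iff_add_eq_0)
qed

lemma fps_x_div_sin_power_ode:
  fixes n :: nat
  defines "P \<equiv> fps_x_div_sin ^ n :: 'a::field_char_0 fps"
  shows "of_nat (n * (n + 1)) * P - of_nat (2 * n) * (fps_X * fps_deriv P)
           + fps_X^2 * fps_deriv (fps_deriv P) + of_nat (n^2) * (fps_X^2 * P)
         = of_nat (n * (n + 1)) * fps_x_div_sin ^ (n + 2)"
proof -
  let ?Q = "fps_x_div_sin :: 'a fps" and ?T = "fps_sinc :: 'a fps" and ?C = "fps_cos 1 :: 'a fps"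
  define N :: "'a fps" where "N = of_nat n"
  have deriv_P: "fps_deriv P = - (N * P * ?Q * fps_deriv ?T)"
  proof (cases n)
    case (Suc m)
    then have "fps_deriv P = N * fps_deriv ?Q * ?Q^m"
      by (simp only: P_def N_def fps_deriv_power' diff_Suc_1)
    then show ?thesis
      by (simp add: Suc P_def fps_deriv_x_div_sin power2_eq_square algebra_simps)
  qed (simp add: P_def N_def)
  have "fps_deriv (fps_deriv P) =
      N * (N + 1) * P * ?Q^2 * (fps_deriv ?T)^2 - N * P * ?Q * fps_deriv (fps_deriv ?T)"
    by (simp add: deriv_P N_def fps_deriv_x_div_sin algebra_simps power2_eq_square)
  then have X2_deriv2_P: "fps_X^2 * fps_deriv (fps_deriv P) =
      N * (N + 1) * P * ?Q^2 * (?C - ?T)^2 - N * P * ?Q * (2 * ?T - 2 * ?C - fps_X^2 * ?T)"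
    by (simp flip: fps_X_mult_deriv_sinc fps_X2_mult_deriv2_sinc) (simp add: algebra_simps power2_eq_square)
  have X_deriv_P: "fps_X * fps_deriv P = - (N * P * ?Q * (?C - ?T))"
    by (simp add: deriv_P algebra_simps flip: fps_X_mult_deriv_sinc)
  have "N * (N + 1) * P - 2 * N * (fps_X * fps_deriv P) + fps_X^2 * fps_deriv (fps_deriv P)
          + N^2 * (fps_X^2 * P) = N * (N + 1) * P * ?Q^2"
    unfolding X_deriv_P X2_deriv2_P
    using fps_x_div_sin_mult_sinc[where 'a='a] fps_cos_squared_sinc[where 'a='a] by algebra
  then show ?thesis
    by (simp add: N_def P_def power_add power2_eq_square algebra_simps)
qed

lemma fps_nth_x_div_sin_power_rec:
  fixes n j :: nat
  defines "Q \<equiv> fps_x_div_sin :: 'a::field_char_0 fps"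
  shows "of_nat (n * (n + 1)) * fps_nth (Q ^ (n + 2)) j =
           (of_nat (n * (n + 1)) - of_nat (2 * n) * of_nat j + of_nat j * (of_nat j - 1))
             * fps_nth (Q ^ n) j
           + (if 2 \<le> j then of_nat (n^2) * fps_nth (Q ^ n) (j - 2) else 0)"
  using fps_nth_euler_ode[OF fps_x_div_sin_power_ode[of n, unfolded fps_of_nat[symmetric]], of j]
  unfolding Q_def fps_mult_left_const_nth .

lemma fps_nth_x_div_sin_power_even_rec:
  fixes k m :: nat
  defines "w \<equiv> k + m + 1" and "Q \<equiv> fps_x_div_sin :: 'a::field_char_0 fps"
  shows "of_nat (2 * w * (2 * w + 1)) * fps_nth (Q ^ (2 * (w + 1))) (2 * (k + 1)) =
           of_nat (2 * m * (2 * m + 1)) * fps_nth (Q ^ (2 * w)) (2 * (k + 1))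
           + of_nat (4 * w^2) * fps_nth (Q ^ (2 * w)) (2 * k)"
proof -
  \<comment> \<open>n(n+1) - 2nj + j(j-1) = (n-j)(n-j+1), and here n - j = 2m\<close>
  have "(of_nat (2 * w * (2 * w + 1)) - of_nat (2 * (2 * w)) * of_nat (2 * k + 2)
          + of_nat (2 * k + 2) * (of_nat (2 * k + 2) - 1) :: 'a) = of_nat (2 * m * (2 * m + 1))"
    by (simp add: w_def algebra_simps)
  then show ?thesis
    using fps_nth_x_div_sin_power_rec[of "2 * w" "2 * k + 2", where 'a='a]
    by (simp add: Q_def power2_eq_square algebra_simps)
qed

(* The substitution v = i + m + 1 keeps (2v - 2i - 1)! free of truncated subtraction. *)
lemma fps_nth_x_div_sin_power_even:
  fixes i m :: nat
  shows "fps_nth ((fps_x_div_sin :: 'a::real_field fps) ^ (2 * (i + m + 1))) (2 * i)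
           * fact (2 * (i + m) + 1)
         = of_real (4 ^ i * fact (2 * m + 1) * esym_sq (i + m + 1) i)"
proof (induction "i + m" arbitrary: i m)
  case 0
  then show ?case by simp
next
  case (Suc n)
  let ?c = "\<lambda>v i. fps_nth ((fps_x_div_sin :: 'a fps) ^ (2 * v)) (2 * i)"
  show ?case
  proof (cases i)
    case 0
    then show ?thesis
      using fps_nth_x_div_sin_power_0[of "2 * (m + 1)", where 'a='a] by simp
  next
    case (Suc k)
    define w where "w = k + m + 1"
    have IH_k: "?c w k * fact (2 * (k + m) + 1) = of_real (4 ^ k * fact (2 * m + 1) * esym_sq w k)"
      using Suc.hyps(1)[of k m] Suc.hyps(2) \<open>i = Suc k\<close> by (simp add: w_def)
    have IH_Suc_k: "of_nat (2 * m * (2 * m + 1)) * ?c w (k + 1) * fact (2 * (k + m) + 1)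
        = of_real (4 ^ (k + 1) * fact (2 * m + 1) * esym_sq w (k + 1))"
    proof (cases m)
      case 0
      \<comment> \<open>the coefficient vanishes exactly when s(k+1,k+1) = 0 does\<close>
      then show ?thesis by (simp add: w_def esym_sq_eq_0)
    next
      case (Suc m')
      have IH: "?c w (k + 1) * fact (2 * (k + m) + 1)
          = of_real (4 ^ (k + 1) * fact (2 * m' + 1) * esym_sq w (k + 1))"
        using Suc.hyps(1)[of "k + 1" m'] Suc.hyps(2) \<open>i = Suc k\<close> \<open>m = Suc m'\<close>
        by (simp add: w_def)
      have fact_m: "real (2 * m * (2 * m + 1)) * fact (2 * m' + 1) = fact (2 * m + 1)"
        by (simp add: \<open>m = Suc m'\<close> algebra_simps)
      have "of_nat (2 * m * (2 * m + 1)) * ?c w (k + 1) * fact (2 * (k + m) + 1)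
          = of_nat (2 * m * (2 * m + 1)) * of_real (4 ^ (k + 1) * fact (2 * m' + 1) * esym_sq w (k + 1))"
        by (simp only: mult.assoc IH)
      also have "\<dots> = of_real (4 ^ (k + 1) * (real (2 * m * (2 * m + 1)) * fact (2 * m' + 1))
                          * esym_sq w (k + 1))"
        by (simp only: of_real_mult of_real_of_nat_eq mult_ac)
      finally show ?thesis
        by (simp only: fact_m)
    qed
    have fact_w: "fact (2 * (i + m) + 1) = of_nat (2 * w * (2 * w + 1)) * (fact (2 * (k + m) + 1) :: 'a)"
      by (simp add: \<open>i = Suc k\<close> w_def algebra_simps)
    have v_eq: "i + m + 1 = w + 1" and i_eq: "i = k + 1"
      by (simp_all add: \<open>i = Suc k\<close> w_def)
    have "?c (i + m + 1) i * fact (2 * (i + m) + 1)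
        = (of_nat (2 * w * (2 * w + 1)) * ?c (w + 1) (k + 1)) * fact (2 * (k + m) + 1)"
      unfolding fact_w unfolding v_eq unfolding i_eq by (simp only: mult_ac)
    also have "\<dots> = of_nat (2 * m * (2 * m + 1)) * ?c w (k + 1) * fact (2 * (k + m) + 1)
                     + of_nat (4 * w^2) * (?c w k * fact (2 * (k + m) + 1))"
      unfolding fps_nth_x_div_sin_power_even_rec[of k m, folded w_def]
      by (simp only: distrib_right mult.assoc)
    also have "\<dots> = of_real (4 ^ (k + 1) * fact (2 * m + 1) * esym_sq w (k + 1))
                     + of_nat (4 * w^2) * of_real (4 ^ k * fact (2 * m + 1) * esym_sq w k)"
      unfolding IH_Suc_k IH_k ..
    also have "\<dots> = of_real (4 ^ (k + 1) * fact (2 * m + 1) * (esym_sq w (k + 1) + (real w)^2 * esym_sq w k))"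
      by (simp add: algebra_simps)
    also have "\<dots> = of_real (4 ^ i * fact (2 * m + 1) * esym_sq (i + m + 1) i)"
      by (simp add: esym_sq_Suc_Suc \<open>i = Suc k\<close> w_def)
    finally show ?thesis .
  qed
qed

section \<open>Convergence of the expansion\<close>

definition x_div_sin :: "complex \<Rightarrow> complex" where
  "x_div_sin z = (if z = 0 then 1 else z / sin z)"

lemma has_fps_expansion_x_div_sin: "x_div_sin has_fps_expansion fps_x_div_sin"
proof -
  have "1 \<le> subdegree (fps_sin (1 :: complex))"
    by (rule subdegree_geI) (auto simp: fps_eq_iff intro!: exI[of _ 1])
  then have "(\<lambda>z::complex. if z = 0 then 1 else sin z / z ^ 1) has_fps_expansion fps_sinc"
    unfolding fps_sinc_def by (intro has_fps_expansion_shift has_fps_expansion_sin') simp_all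
  then have "(\<lambda>z::complex. inverse (if z = 0 then 1 else sin z / z ^ 1)) has_fps_expansion fps_x_div_sin"
    unfolding fps_x_div_sin_def by (intro has_fps_expansion_inverse) simp_all
  also have "(\<lambda>z. inverse (if z = 0 then 1 else sin z / z ^ 1)) = x_div_sin"
    by (auto simp: x_div_sin_def fun_eq_iff)
  finally show ?thesis .
qed

lemma sin_nonzero_in_ball: "z \<in> ball 0 pi \<Longrightarrow> z \<noteq> 0 \<Longrightarrow> sin (z::complex) \<noteq> 0"
  by (auto simp: sin_eq_0 norm_mult abs_mult)

lemma holomorphic_on_x_div_sin: "x_div_sin holomorphic_on ball 0 pi"
proof (rule no_isolated_singularity'[where K = "{0}"])
  show "(x_div_sin \<longlongrightarrow> x_div_sin z) (at z within ball 0 pi)" if "z \<in> {0}" for z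
    using has_fps_expansion_imp_continuous[OF has_fps_expansion_x_div_sin] that
    by (simp add: continuous_within)
  have "(\<lambda>z. z / sin z) holomorphic_on ball 0 pi - {0}"
    using sin_nonzero_in_ball by (intro holomorphic_intros) auto
  then show "x_div_sin holomorphic_on ball 0 pi - {0}"
    by (rule holomorphic_transform) (auto simp: x_div_sin_def)
qed auto

lemma sums_x_div_sin_power:
  "norm z < pi \<Longrightarrow> (\<lambda>n. fps_nth (fps_x_div_sin ^ k) n * z ^ n) sums (x_div_sin z ^ k)"
  using holomorphic_on_x_div_sin
  by (intro has_fps_expansion_imp_sums_complex[where r = pi] has_fps_expansion_power
      has_fps_expansion_x_div_sin holomorphic_on_power) auto

lemma of_real_cosec_pow:
  assumes "\<bar>x\<bar> < pi"
  shows "of_real (cosec_pow (real k) x) = x_div_sin (of_real x) ^ k"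
proof (cases "x = 0")
  case True
  then show ?thesis by (simp add: cosec_pow_def x_div_sin_def)
next
  case False
  have "x / sin x = \<bar>x\<bar> / sin \<bar>x\<bar>"
    by (cases "x \<ge> 0") auto
  moreover have "sin \<bar>x\<bar> > 0"
    using False assms by (intro sin_gt_zero) auto
  ultimately have "x / sin x > 0"
    using False by simp
  then show ?thesis
    using False by (simp add: cosec_pow_def x_div_sin_def powr_realpow sin_of_real)
qed

lemma sums_cosec_pow:
  assumes "\<bar>x\<bar> < pi"
  shows "(\<lambda>n. Re (fps_nth (fps_x_div_sin ^ k) n) * x ^ n) sums cosec_pow (real k) x"
proof -
  have "x_div_sin (of_real x) ^ k = of_real (cosec_pow (real k) x)"
    using of_real_cosec_pow[OF assms] by simp
  then show ?thesis
    using sums_Re[OF sums_x_div_sin_power[of "of_real x" k]] assms by (simp flip: of_real_power)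
qed

lemma cosec_pow_minus [simp]: "cosec_pow r (- x) = cosec_pow r x"
  by (simp add: cosec_pow_def)

lemma cosec_num_of_nat:
  "cosec_num (real k) = (\<lambda>i. Re (fps_nth (fps_x_div_sin ^ k) (2 * i)))"
proof -
  let ?P = "\<lambda>c. \<forall>x. \<bar>x\<bar> < pi \<longrightarrow> (\<lambda>i. c i * x ^ (2 * i)) sums cosec_pow (real k) x"
  let ?even = "\<lambda>c n. if even n then c (n div 2) else 0 :: real"
  have expansion: "?P (\<lambda>i. Re (fps_nth (fps_x_div_sin ^ k) (2 * i)))"
  proof (intro allI impI)
    fix x :: real
    assume "\<bar>x\<bar> < pi"
    then show "(\<lambda>i. Re (fps_nth (fps_x_div_sin ^ k) (2 * i)) * x ^ (2 * i)) sums cosec_pow (real k) x"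
      using sums_cosec_pow[of "- x" k] by (intro sums_even_part_powser sums_cosec_pow) auto
  qed
  have even_form: "(\<lambda>n. ?even c n * x ^ n) sums cosec_pow (real k) x"
    if "?P c" "norm x < pi" for c x
  proof -
    have "(\<lambda>i. c i * x ^ (2 * i)) sums cosec_pow (real k) x"
      using that by simp
    then show ?thesis
      unfolding sums_even_powser_iff .
  qed
  have unique: "c = d" if "?P c" "?P d" for c d
  proof -
    have "?even c = ?even d"
      using even_form[OF that(1)] even_form[OF that(2)] by (rule powser_coeffs_unique[OF pi_gt_zero])
    then have "?even c (2 * i) = ?even d (2 * i)" for i
      by (rule fun_cong)
    then show "c = d"
      by auto
  qed
  show ?thesis
    unfolding cosec_num_def by (rule the_equality[of ?P, OF expansion]) (rule unique[OF _ expansion])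
qed

theorem mainTheorem5:
  fixes v i :: nat
  assumes "v \<ge> 1" and "i \<le> v - 1"
  shows "cosec_num (2 * real v) i =
    2 ^ (2 * i) * (Gamma (real (2 * v - 2 * i)) / Gamma (real (2 * v))) * esym_sq v i"
proof -
  define m where "m = v - i - 1"
  have v: "v = i + m + 1"
    using assms unfolding m_def by simp
  have "fps_nth ((fps_x_div_sin :: complex fps) ^ (2 * v)) (2 * i) =
          of_real (4 ^ i * fact (2 * m + 1) * esym_sq v i / fact (2 * (i + m) + 1))"
    using fps_nth_x_div_sin_power_even[of i m] by (simp add: v field_simps del: fact_Suc)
  then have "cosec_num (real (2 * v)) i = 4 ^ i * fact (2 * m + 1) * esym_sq v i / fact (2 * (i + m) + 1)"
    by (simp only: cosec_num_of_nat Re_complex_of_real)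
  moreover have "Gamma (real (2 * v - 2 * i)) = fact (2 * m + 1)"
    using Gamma_fact[of "2 * m + 1"] by (simp add: v algebra_simps)
  moreover have "Gamma (real (2 * v)) = fact (2 * (i + m) + 1)"
    using Gamma_fact[of "2 * (i + m) + 1"] by (simp add: v algebra_simps)
  ultimately show ?thesis
    by (simp add: power_mult)
qed

end
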